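(* Let $p$ be a prime and $r\ge2$ even. Let $(w_1,w_2)$ be a sequence in $U(p^r)$ such that $(f_{p^r,p}(w_1),f_{p^r,p}(w_2))$ is not a $Q_p$-weighted zero-sum sequence, and let $u\in U(p^r)$. Then the sequence $(uw_1,uw_2,pw_1,pw_2)$ in $\mathbb Z_{p^r}$ has no $S(p^r)^*$-weighted zero-sum subsequence.
   Context: $\mathbb Z_m=\mathbb Z/m\mathbb Z$, $U(m)$ its group of units, $S(m)=\{x^2:x\in\mathbb Z_m\}$, $S(m)^*=S(m)\setminus\{0\}$; for a prime $p$, $Q_p=\{x^2:x\in U(p)\}$. For $m\mid n$, $f_{n,m}:\mathbb Z_n\to\mathbb Z_m$ is the natural map. For $A\subseteq\mathbb Z_m$, a sequence $(y_1,\dots,y_k)$ ($k\ge1$) is an $A$-weighted zero-sum sequence if there exist $a_i\in A$ with $\sum a_iy_i=0$; a sequence has an $A$-weighted zero-sum subsequence if some nonempty subsequence is one. *)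

theory Defs
  imports "HOL-Number_Theory.Number_Theory"
begin

text \<open>Z_m is represented by the canonical residues {0..<m} of type int;
  the natural map f_{n,m} is x \<mapsto> x mod m.\<close>

definition Zm :: "int \<Rightarrow> int set" where
  "Zm m = {0..<m}"

definition units_mod :: "int \<Rightarrow> int set" where
  "units_mod m = {x \<in> Zm m. coprime x m}"

definition squares_mod :: "int \<Rightarrow> int set" where
  "squares_mod m = {(x^2) mod m | x. x \<in> Zm m}"

definition squares_star :: "int \<Rightarrow> int set" where
  "squares_star m = squares_mod m - {0}"

definition Qp :: "int \<Rightarrow> int set" where
  "Qp p = {(x^2) mod p | x. x \<in> units_mod p}"

definition weighted_zero_sum :: "int \<Rightarrow> int set \<Rightarrow> int list \<Rightarrow> bool" where
  "weighted_zero_sum m A ys \<longleftrightarrow> ys \<noteq> [] \<and>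
     (\<exists>a. (\<forall>i<length ys. a i \<in> A) \<and> (\<Sum>i<length ys. a i * ys ! i) mod m = 0)"

definition has_weighted_zero_sum_subseq :: "int \<Rightarrow> int set \<Rightarrow> int list \<Rightarrow> bool" where
  "has_weighted_zero_sum_subseq m A ys \<longleftrightarrow>
     (\<exists>I. I \<subseteq> {..<length ys} \<and> I \<noteq> {} \<and> weighted_zero_sum m A (nths ys I))"

end

theory Submission
  imports Defs
begin

text \<open>A nonzero square in Z/p^r is p^(2k) y^2 with y prime to p and 2k < r. A weighted
  relation among u w1, u w2, p w1, p w2 therefore reads u X + p Y = 0 mod p^r with
  X = b1 w1 + b2 w2 and Y = b3 w1 + b4 w2. Whenever its weights are not both zero, such a
  combination has even p-adic valuation below r: if the two terms have different valuations the
  smaller one wins, and if they agree, the unit part reduces mod p to a Q_p-weighted sum of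
  (w1, w2), which is nonzero by hypothesis. So u X has even and p Y odd valuation, still below r
  because r is even, and a sum of two elements of distinct valuations cannot vanish mod p^r.\<close>

definition has_valuation_mod :: "int \<Rightarrow> nat \<Rightarrow> int \<Rightarrow> nat \<Rightarrow> bool" where
  "has_valuation_mod p r X e \<longleftrightarrow> e < r \<and> (\<exists>g t. coprime g p \<and> X = p^e * g + p^r * t)"

lemma has_valuation_modI:
  "e < r \<Longrightarrow> coprime g p \<Longrightarrow> X = p^e * g + p^r * t \<Longrightarrow> has_valuation_mod p r X e"
  unfolding has_valuation_mod_def by blast

lemma coprime_prime_right_iff:
  fixes p x :: int
  assumes "prime p"
  shows "coprime x p \<longleftrightarrow> \<not> p dvd x"
proof
  assume "coprime x p"
  then show "\<not> p dvd x"
    using assms by (meson coprime_common_divisor dvd_refl not_prime_unit)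
next
  assume "\<not> p dvd x"
  then show "coprime x p"
    using prime_imp_coprime[OF assms] coprime_commute by metis
qed

lemma has_valuation_mod_not_dvd:
  fixes p X :: int
  assumes "prime p" "has_valuation_mod p r X e"
  shows "\<not> p^r dvd X"
proof
  assume "p^r dvd X"
  from assms(2) obtain g t where "e < r" "coprime g p" "X = p^e * g + p^r * t"
    unfolding has_valuation_mod_def by blast
  then have "p^e * p^(r-e) dvd p^e * g"
    using \<open>p^r dvd X\<close> by (simp add: dvd_add_left_iff flip: power_add)
  then have "p dvd g"
    using assms(1) \<open>e < r\<close> by (auto elim: dvd_trans[rotated] intro: dvd_power)
  with \<open>coprime g p\<close> show False
    using coprime_prime_right_iff[OF assms(1)] by blast
qed

lemma has_valuation_mod_add:
  fixes p X Y :: int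
  assumes "prime p" "e < f" "has_valuation_mod p r X e" "has_valuation_mod p r Y f"
  shows "has_valuation_mod p r (X + Y) e"
proof -
  from assms(3) obtain g t where X: "e < r" "coprime g p" "X = p^e * g + p^r * t"
    unfolding has_valuation_mod_def by blast
  from assms(4) obtain h s where Y: "Y = p^f * h + p^r * s"
    unfolding has_valuation_mod_def by blast
  have "p^f = p^e * p^(f-e)"
    using assms(2) by (simp flip: power_add)
  then have "X + Y = p^e * (g + p^(f-e) * h) + p^r * (t + s)"
    using X(3) Y by (simp add: algebra_simps)
  moreover have "p dvd p^(f-e) * h"
    using assms(2) by simp
  then have "coprime (g + p^(f-e) * h) p"
    using X(2) coprime_prime_right_iff[OF assms(1)] by (metis dvd_add_left_iff)
  ultimately show ?thesis
    using X(1) has_valuation_modI by blast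
qed

lemma has_valuation_mod_add_neq:
  fixes p X Y :: int
  assumes "prime p" "e \<noteq> f" "has_valuation_mod p r X e" "has_valuation_mod p r Y f"
  shows "has_valuation_mod p r (X + Y) (min e f)"
proof (cases "e < f")
  case True
  then show ?thesis
    using has_valuation_mod_add[OF assms(1) _ assms(3,4)] by simp
next
  case False
  then show ?thesis
    using has_valuation_mod_add[OF assms(1) _ assms(4,3)] assms(2) by (simp add: add.commute)
qed

lemma has_valuation_mod_mult_coprime:
  fixes p c X :: int
  assumes "coprime c p" "has_valuation_mod p r X e"
  shows "has_valuation_mod p r (c * X) e"
proof -
  from assms(2) obtain g t where "e < r" "coprime g p" "X = p^e * g + p^r * t"
    unfolding has_valuation_mod_def by blast
  then show ?thesis
    using assms(1) by (intro has_valuation_modI[of e r "c * g" p _ "c * t"]) (auto simp: algebra_simps)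
qed

lemma has_valuation_mod_mult_self:
  fixes p X :: int
  assumes "has_valuation_mod p r X e" "e + 1 < r"
  shows "has_valuation_mod p r (p * X) (e + 1)"
proof -
  from assms(1) obtain g t where "coprime g p" "X = p^e * g + p^r * t"
    unfolding has_valuation_mod_def by blast
  then show ?thesis
    using assms(2) by (intro has_valuation_modI[of _ r g p _ "p * t"]) (auto simp: algebra_simps)
qed

lemma squares_star_prime_power_decomp:
  fixes p b :: int
  assumes "prime p" "b \<in> squares_star (p^r)"
  obtains k y t where "2 * k < r" "coprime y p" "b = p^(2*k) * y^2 + p^r * t"
proof -
  from assms(2) obtain x where x: "b = x^2 mod p^r" "b \<noteq> 0"
    unfolding squares_star_def squares_mod_def by blast
  then have "x \<noteq> 0"
    by auto
  then obtain y where y: "x = p ^ multiplicity p x * y" "\<not> p dvd y"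
    using multiplicity_decompose' assms(1) not_prime_unit by blast
  define k where "k = multiplicity p x"
  have x2: "x^2 = p^(2*k) * y^2"
    using y(1) unfolding k_def by (metis mult.commute power_mult power_mult_distrib)
  have "2 * k < r"
  proof (rule ccontr)
    assume "\<not> 2 * k < r"
    then have "p^r dvd x^2"
      using x2 by (simp add: le_imp_power_dvd)
    then show False
      using x by simp
  qed
  moreover have "b = p^(2*k) * y^2 + p^r * (- (x^2 div p^r))"
    using x(1) x2 by (simp add: minus_div_mult_eq_mod[symmetric] algebra_simps)
  ultimately show thesis
    using that y(2) coprime_prime_right_iff[OF assms(1)] by blast
qed

lemma square_mod_in_Qp:
  fixes p y :: int
  assumes "prime p" "coprime y p"
  shows "y^2 mod p \<in> Qp p"
proof -
  have "coprime (y mod p) p"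
    using assms by (simp add: prime_ge_2_int)
  moreover have "y mod p \<in> Zm p"
    using prime_gt_0_int[OF assms(1)] unfolding Zm_def by simp
  ultimately have "y mod p \<in> units_mod p"
    unfolding units_mod_def by simp
  moreover have "(y mod p)^2 mod p = y^2 mod p"
    by (simp add: power_mod)
  ultimately show ?thesis
    unfolding Qp_def by (intro CollectI exI[of _ "y mod p"]) simp
qed

lemma weighted_zero_sum_Qp_if_dvd:
  fixes p y1 y2 w1 w2 :: int
  assumes "prime p" "coprime y1 p" "coprime y2 p" "p dvd y1^2 * w1 + y2^2 * w2"
  shows "weighted_zero_sum p (Qp p) [w1 mod p, w2 mod p]"
proof -
  define ws where "ws = [w1 mod p, w2 mod p]"
  define a where "a i = [y1^2 mod p, y2^2 mod p] ! i" for i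
  have "\<forall>i<length ws. a i \<in> Qp p"
    using square_mod_in_Qp[OF assms(1)] assms(2,3) by (auto simp: ws_def a_def less_Suc_eq)
  moreover have "(\<Sum>i<length ws. a i * ws ! i) mod p = (y1^2 * w1 + y2^2 * w2) mod p"
    by (simp add: ws_def a_def numeral_2_eq_2 mod_add_cong[OF mod_mult_eq mod_mult_eq])
  ultimately show ?thesis
    using assms(4) unfolding weighted_zero_sum_def ws_def[symmetric] by (auto simp: ws_def)
qed

lemma has_valuation_mod_square_mult:
  fixes p y w :: int
  assumes "e < r" "coprime y p" "coprime w p"
  shows "has_valuation_mod p r ((p^e * y^2 + p^r * t) * w) e"
  using assms by (intro has_valuation_modI[of _ r "y^2 * w" p _ "t * w"]) (auto simp: algebra_simps)

lemma has_valuation_mod_square_weight: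
  fixes p b w :: int
  assumes "prime p" "b \<in> squares_star (p^r)" "coprime w p"
  shows "\<exists>k. has_valuation_mod p r (b * w) (2 * k)"
proof -
  obtain k y t where "2 * k < r" "coprime y p" "b = p^(2*k) * y^2 + p^r * t"
    using squares_star_prime_power_decomp[OF assms(1,2)] .
  then show ?thesis
    using has_valuation_mod_square_mult[OF _ _ assms(3)] by blast
qed

lemma square_weighted_pair_valuation:
  fixes p b1 b2 w1 w2 :: int
  assumes p: "prime p"
    and no_zero_sum: "\<not> weighted_zero_sum p (Qp p) [w1 mod p, w2 mod p]"
    and w: "coprime w1 p" "coprime w2 p"
    and b: "b1 \<in> insert 0 (squares_star (p^r))" "b2 \<in> insert 0 (squares_star (p^r))"
    and nonzero: "b1 \<noteq> 0 \<or> b2 \<noteq> 0"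
  shows "\<exists>k. has_valuation_mod p r (b1 * w1 + b2 * w2) (2 * k)"
proof -
  consider "b1 = 0" "b2 \<in> squares_star (p^r)" | "b2 = 0" "b1 \<in> squares_star (p^r)"
    | "b1 \<in> squares_star (p^r)" "b2 \<in> squares_star (p^r)"
    using b nonzero by auto
  then show ?thesis
  proof cases
    case 1
    then show ?thesis
      using has_valuation_mod_square_weight[OF p _ w(2)] by simp
  next
    case 2
    then show ?thesis
      using has_valuation_mod_square_weight[OF p _ w(1)] by simp
  next
    case 3
    obtain k1 y1 t1 where b1: "2 * k1 < r" "coprime y1 p" "b1 = p^(2*k1) * y1^2 + p^r * t1"
      using squares_star_prime_power_decomp[OF p 3(1)] .
    obtain k2 y2 t2 where b2: "2 * k2 < r" "coprime y2 p" "b2 = p^(2*k2) * y2^2 + p^r * t2"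
      using squares_star_prime_power_decomp[OF p 3(2)] .
    show ?thesis
    proof (cases "k1 = k2")
      case True
      have "\<not> p dvd y1^2 * w1 + y2^2 * w2"
        using weighted_zero_sum_Qp_if_dvd[OF p b1(2) b2(2)] no_zero_sum by blast
      then have "coprime (y1^2 * w1 + y2^2 * w2) p"
        using coprime_prime_right_iff[OF p] by blast
      moreover have "b1 * w1 + b2 * w2 = p^(2*k1) * (y1^2 * w1 + y2^2 * w2) + p^r * (t1 * w1 + t2 * w2)"
        using b1(3) b2(3) True by (simp add: algebra_simps)
      ultimately show ?thesis
        using b1(1) has_valuation_modI by blast
    next
      case False
      have "has_valuation_mod p r (b1 * w1) (2 * k1)" "has_valuation_mod p r (b2 * w2) (2 * k2)"
        using has_valuation_mod_square_mult b1 b2 w by simp_all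
      then have "has_valuation_mod p r (b1 * w1 + b2 * w2) (min (2 * k1) (2 * k2))"
        using has_valuation_mod_add_neq[OF p, of "2 * k1" "2 * k2"] False by simp
      then show ?thesis
        by (metis min_def)
    qed
  qed
qed

lemma square_weighted_combination_not_dvd:
  fixes p u w1 w2 b0 b1 b2 b3 :: int
  assumes p: "prime p" and "even r"
    and no_zero_sum: "\<not> weighted_zero_sum p (Qp p) [w1 mod p, w2 mod p]"
    and u: "coprime u p" and w: "coprime w1 p" "coprime w2 p"
    and b: "b0 \<in> insert 0 (squares_star (p^r))" "b1 \<in> insert 0 (squares_star (p^r))"
           "b2 \<in> insert 0 (squares_star (p^r))" "b3 \<in> insert 0 (squares_star (p^r))"
    and nonzero: "b0 \<noteq> 0 \<or> b1 \<noteq> 0 \<or> b2 \<noteq> 0 \<or> b3 \<noteq> 0"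
  shows "\<not> p^r dvd u * (b0 * w1 + b1 * w2) + p * (b2 * w1 + b3 * w2)"
proof -
  define X where "X = b0 * w1 + b1 * w2"
  define Y where "Y = b2 * w1 + b3 * w2"
  have X: "b0 = 0 \<and> b1 = 0 \<or> (\<exists>k. has_valuation_mod p r (u * X) (2 * k))"
    using square_weighted_pair_valuation[OF p no_zero_sum w b(1,2)]
      has_valuation_mod_mult_coprime[OF u] unfolding X_def by blast
  have Y: "b2 = 0 \<and> b3 = 0 \<or> (\<exists>k. has_valuation_mod p r (p * Y) (2 * k + 1))"
  proof (cases "b2 = 0 \<and> b3 = 0")
    case False
    then obtain k where k: "has_valuation_mod p r Y (2 * k)"
      using square_weighted_pair_valuation[OF p no_zero_sum w b(3,4)] unfolding Y_def by blast
    then have "2 * k < r"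
      unfolding has_valuation_mod_def by blast
    with \<open>even r\<close> have "2 * k + 1 < r"
      by presburger
    then show ?thesis
      using has_valuation_mod_mult_self[OF k] by blast
  qed simp
  have "\<exists>e. has_valuation_mod p r (u * X + p * Y) e"
  proof -
    consider "b2 = 0" "b3 = 0" "\<exists>k. has_valuation_mod p r (u * X) (2 * k)"
      | "b0 = 0" "b1 = 0" "\<exists>k. has_valuation_mod p r (p * Y) (2 * k + 1)"
      | "\<exists>k. has_valuation_mod p r (u * X) (2 * k)" "\<exists>k. has_valuation_mod p r (p * Y) (2 * k + 1)"
      using X Y nonzero by blast
    then show ?thesis
    proof cases
      case 1
      then show ?thesis
        unfolding Y_def by auto
    next
      case 2
      then show ?thesis
        unfolding X_def by auto
    next
      case 3
      then obtain k j where "has_valuation_mod p r (u * X) (2 * k)"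
        "has_valuation_mod p r (p * Y) (2 * j + 1)"
        by blast
      moreover have "2 * k \<noteq> 2 * j + 1"
        by presburger
      ultimately show ?thesis
        using has_valuation_mod_add_neq[OF p] by blast
    qed
  qed
  then show ?thesis
    using has_valuation_mod_not_dvd[OF p] unfolding X_def Y_def by blast
qed

lemma weighted_sum_nths_extend:
  fixes xs :: "'a::semiring_0 list"
  assumes "\<forall>i<length (nths xs I). a i \<in> A"
  shows "\<exists>b. (\<forall>j<length xs. b j \<in> (if j \<in> I then A else {0})) \<and>
             (\<Sum>i<length (nths xs I). a i * nths xs I ! i) = (\<Sum>j<length xs. b j * xs ! j)"
  using assms
proof (induction xs arbitrary: I a)
  case Nil
  then show ?case
    by simp
next
  case (Cons x xs)
  define I' where "I' = {j. Suc j \<in> I}"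
  show ?case
  proof (cases "0 \<in> I")
    case True
    then have nths: "nths (x # xs) I = x # nths xs I'"
      by (simp add: nths_Cons I'_def)
    have "\<forall>i<length (nths xs I'). a (Suc i) \<in> A"
      using Cons.prems unfolding nths by simp
    then obtain b where b: "\<forall>j<length xs. b j \<in> (if j \<in> I' then A else {0})"
      "(\<Sum>i<length (nths xs I'). a (Suc i) * nths xs I' ! i) = (\<Sum>j<length xs. b j * xs ! j)"
      using Cons.IH[of I' "\<lambda>i. a (Suc i)"] by blast
    have "a 0 \<in> A"
      using Cons.prems unfolding nths by auto
    have "\<forall>j<length (x # xs). case_nat (a 0) b j \<in> (if j \<in> I then A else {0})"
      using True b(1) \<open>a 0 \<in> A\<close> by (auto simp: I'_def split: nat.split)
    moreover have "(\<Sum>i<length (nths (x # xs) I). a i * nths (x # xs) I ! i)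
        = (\<Sum>j<length (x # xs). case_nat (a 0) b j * (x # xs) ! j)"
      using b(2) by (simp add: nths sum.lessThan_Suc_shift del: sum.lessThan_Suc)
    ultimately show ?thesis
      by blast
  next
    case False
    then have nths: "nths (x # xs) I = nths xs I'"
      by (simp add: nths_Cons I'_def)
    obtain b where b: "\<forall>j<length xs. b j \<in> (if j \<in> I' then A else {0})"
      "(\<Sum>i<length (nths xs I'). a i * nths xs I' ! i) = (\<Sum>j<length xs. b j * xs ! j)"
      using Cons.IH[of I' a] Cons.prems unfolding nths by blast
    have "\<forall>j<length (x # xs). case_nat 0 b j \<in> (if j \<in> I then A else {0})"
      using False b(1) by (auto simp: I'_def split: nat.split)
    moreover have "(\<Sum>i<length (nths (x # xs) I). a i * nths (x # xs) I ! i)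
        = (\<Sum>j<length (x # xs). case_nat 0 b j * (x # xs) ! j)"
      using b(2) by (simp add: nths sum.lessThan_Suc_shift del: sum.lessThan_Suc)
    ultimately show ?thesis
      by blast
  qed
qed

lemma has_weighted_zero_sum_subseq_weights:
  assumes "has_weighted_zero_sum_subseq m A ys"
  obtains b where "\<forall>j<length ys. b j \<in> insert 0 A" "\<exists>j<length ys. b j \<in> A"
    "(\<Sum>j<length ys. b j * ys ! j) mod m = 0"
proof -
  obtain I where I: "I \<subseteq> {..<length ys}" "I \<noteq> {}" "weighted_zero_sum m A (nths ys I)"
    using assms unfolding has_weighted_zero_sum_subseq_def by blast
  obtain a where a: "\<forall>i<length (nths ys I). a i \<in> A"
    "(\<Sum>i<length (nths ys I). a i * nths ys I ! i) mod m = 0"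
    using I(3) unfolding weighted_zero_sum_def by meson
  obtain b where b: "\<forall>j<length ys. b j \<in> (if j \<in> I then A else {0})"
    "(\<Sum>i<length (nths ys I). a i * nths ys I ! i) = (\<Sum>j<length ys. b j * ys ! j)"
    using weighted_sum_nths_extend[OF a(1)] by blast
  obtain j where "j \<in> I"
    using I(2) by blast
  with I(1) b(1) have "\<exists>j<length ys. b j \<in> A"
    by (metis lessThan_iff subsetD)
  moreover have "\<forall>j<length ys. b j \<in> insert 0 A"
    using b(1) by (metis if_splits(1) insertCI singletonD)
  ultimately show thesis
    using that a(2) b(2) by simp
qed

lemma units_mod_prime_power_coprime:
  "0 < r \<Longrightarrow> x \<in> units_mod (p ^ r) \<Longrightarrow> coprime x p"
  unfolding units_mod_def by simp

theorem mainTheorem13: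
  fixes p :: int and r :: nat and w1 w2 u :: int
  assumes "prime p" and "r \<ge> 2" and "even r"
    and "w1 \<in> units_mod (p ^ r)" and "w2 \<in> units_mod (p ^ r)"
    and "\<not> weighted_zero_sum p (Qp p) [w1 mod p, w2 mod p]"
    and "u \<in> units_mod (p ^ r)"
  shows "\<not> has_weighted_zero_sum_subseq (p ^ r) (squares_star (p ^ r))
           [(u * w1) mod p ^ r, (u * w2) mod p ^ r, (p * w1) mod p ^ r, (p * w2) mod p ^ r]"
proof
  define zs where "zs = [u * w1, u * w2, p * w1, p * w2]"
  assume "has_weighted_zero_sum_subseq (p ^ r) (squares_star (p ^ r))
           [(u * w1) mod p ^ r, (u * w2) mod p ^ r, (p * w1) mod p ^ r, (p * w2) mod p ^ r]"
  then obtain b where b: "\<forall>j<4. b j \<in> insert 0 (squares_star (p ^ r))"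
      "\<exists>j<4. b j \<in> squares_star (p ^ r)"
      "(\<Sum>j<4. b j * (zs ! j mod p ^ r)) mod p ^ r = 0"
    by (rule has_weighted_zero_sum_subseq_weights) (auto simp: zs_def less_Suc_eq numeral_eq_Suc)
  have "[\<Sum>j<4. b j * (zs ! j mod p ^ r) = \<Sum>j<4. b j * zs ! j] (mod p ^ r)"
    by (rule cong_sum) (simp add: cong_def mod_mult_right_eq)
  with b(3) have "p ^ r dvd (\<Sum>j<4. b j * zs ! j)"
    by (simp add: cong_def dvd_eq_mod_eq_0)
  also have "(\<Sum>j<4. b j * zs ! j) = u * (b 0 * w1 + b 1 * w2) + p * (b 2 * w1 + b 3 * w2)"
    by (simp add: zs_def eval_nat_numeral distrib_left mult_ac)
  finally have "p ^ r dvd u * (b 0 * w1 + b 1 * w2) + p * (b 2 * w1 + b 3 * w2)" .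
  moreover have "b 0 \<noteq> 0 \<or> b 1 \<noteq> 0 \<or> b 2 \<noteq> 0 \<or> b 3 \<noteq> 0"
    using b(2) by (auto simp: squares_star_def eval_nat_numeral less_Suc_eq)
  moreover have "coprime u p" "coprime w1 p" "coprime w2 p"
    using assms(2,4,5,7) units_mod_prime_power_coprime[of r] by simp_all
  ultimately show False
    using square_weighted_combination_not_dvd[OF assms(1,3,6)] b(1) by (simp add: eval_nat_numeral)
qed

end
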